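(* Let $(D=(V,A),c,r,K)$ be an instance of the node-weighted Directed Steiner Tree problem, $n=|V|$, and let $(x,f)$ be a feasible solution of (LP-DST). Let $S=\{v\in V:x_v>0\}$, $U=\{v\in V:x_v\ge1/\sqrt n\}$, $U'=S\setminus U$, and let $EX$ be the set of terminals $t\in K$ for which there is no directed path from $r$ to $t$ in $D[U]$. For $t\in EX$ let $X_t$ be the set of vertices $w\in U'$ such that there is a directed path from $w$ to $t$ in $D[U\cup\{w\}]$. Then $|X_t|\ge\sqrt n$ for every $t\in EX$.
   Context: For $v\in V$, $\mathcal P_v$ denotes the set of simple directed paths in $D$ from $r$ to $v$. (LP-DST) has variables $x_v$ ($v\in V$) and $f^t_P$ ($t\in K$, $P\in\mathcal P_t$) and constraints: $\sum_{P\in\mathcal P_t}f^t_P=1$ for all $t\in K$; $\sum_{P\in\mathcal P_t: v\in P}f^t_P\le x_v$ for all $v\in V$, $t\in K$; $0\le x_v\le 1$; $0\le f^t_P\le 1$ (objective: minimize $\sum_v x_vc(v)$). $D[W]$ is the subgraph induced by $W$. *)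

theory Defs
  imports Complex_Main
begin

definition is_path :: "('a \<times> 'a) set \<Rightarrow> 'a set \<Rightarrow> 'a list \<Rightarrow> 'a \<Rightarrow> 'a \<Rightarrow> bool" where
  "is_path A W p u v \<longleftrightarrow> p \<noteq> [] \<and> hd p = u \<and> last p = v \<and> set p \<subseteq> W \<and>
     (\<forall>i < length p - 1. (p ! i, p ! Suc i) \<in> A)"

definition simple_paths :: "'a set \<Rightarrow> ('a \<times> 'a) set \<Rightarrow> 'a \<Rightarrow> 'a \<Rightarrow> 'a list set" where
  "simple_paths V A u v = {p. is_path A V p u v \<and> distinct p}"

definition reachable_in :: "('a \<times> 'a) set \<Rightarrow> 'a set \<Rightarrow> 'a \<Rightarrow> 'a \<Rightarrow> bool" where
  "reachable_in A W u v \<longleftrightarrow> (\<exists>p. is_path A W p u v)"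

definition dst_instance :: "'a set \<Rightarrow> ('a \<times> 'a) set \<Rightarrow> ('a \<Rightarrow> real) \<Rightarrow> 'a \<Rightarrow> 'a set \<Rightarrow> bool" where
  "dst_instance V A c r K \<longleftrightarrow> finite V \<and> A \<subseteq> V \<times> V \<and> r \<in> V \<and> K \<subseteq> V \<and> (\<forall>v\<in>V. c v \<ge> 0)"

definition lp_dst_feasible :: "'a set \<Rightarrow> ('a \<times> 'a) set \<Rightarrow> 'a \<Rightarrow> 'a set \<Rightarrow>
    ('a \<Rightarrow> real) \<Rightarrow> ('a \<Rightarrow> 'a list \<Rightarrow> real) \<Rightarrow> bool" where
  "lp_dst_feasible V A r K x f \<longleftrightarrow>
     (\<forall>t\<in>K. (\<Sum>P\<in>simple_paths V A r t. f t P) = 1) \<and>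
     (\<forall>v\<in>V. \<forall>t\<in>K. (\<Sum>P\<in>{P \<in> simple_paths V A r t. v \<in> set P}. f t P) \<le> x v) \<and>
     (\<forall>v\<in>V. 0 \<le> x v \<and> x v \<le> 1) \<and>
     (\<forall>t\<in>K. \<forall>P\<in>simple_paths V A r t. 0 \<le> f t P \<and> f t P \<le> 1)"

end

(*
  Every r-t path P leaves U, because t is not reachable from r in D[U]. The last vertex w
  of P outside U reaches t along the tail of P, which lies in D[U + w]. So the set Y of
  vertices w of V - U from which t is reachable in D[U + w] meets every r-t path, and the
  LP constraints give the union bound 1 = sum_P f^t_P <= sum_{w in Y} x_w. Vertices of Y
  with x_w = 0 contribute nothing, so the sum is over X_t, where x_w < 1/sqrt n; hence
  |X_t| >= sqrt n.
*)
theory Submission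
  imports Defs
begin

lemma sum_le_sum_over_cover:
  fixes g :: "'i \<Rightarrow> 'b::ordered_comm_monoid_add"
  assumes "finite I" "finite J"
    and "\<And>i. i \<in> I \<Longrightarrow> 0 \<le> g i"
    and "\<And>i. i \<in> I \<Longrightarrow> \<exists>j\<in>J. R i j"
  shows "sum g I \<le> (\<Sum>j\<in>J. sum g {i \<in> I. R i j})"
proof -
  have "g i \<le> (\<Sum>j\<in>J. if R i j then g i else 0)" if i: "i \<in> I" for i
  proof -
    obtain j where "j \<in> J" "R i j" using assms(4)[OF i] by blast
    then have "(if R i j then g i else 0) \<le> (\<Sum>j\<in>J. if R i j then g i else 0)"
      using sum_mono2[of J "{j}" "\<lambda>j. if R i j then g i else 0"] assms(2,3) i by auto
    with \<open>R i j\<close> show ?thesis by simp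
  qed
  then have "sum g I \<le> (\<Sum>i\<in>I. \<Sum>j\<in>J. if R i j then g i else 0)"
    by (rule sum_mono)
  also have "\<dots> = (\<Sum>j\<in>J. \<Sum>i\<in>I. if R i j then g i else 0)"
    by (rule sum.swap)
  also have "\<dots> = (\<Sum>j\<in>J. sum g {i \<in> I. R i j})"
    by (simp add: sum.inter_filter assms(1))
  finally show ?thesis .
qed

lemma finite_simple_paths:
  assumes "finite V"
  shows "finite (simple_paths V A u v)"
proof (rule finite_subset[OF _ finite_lists_length_le[OF assms, of "card V"]])
  show "simple_paths V A u v \<subseteq> {xs. set xs \<subseteq> V \<and> length xs \<le> card V}"
    using assms by (auto simp: simple_paths_def is_path_def
        dest: card_mono[of V "set _"] simp flip: distinct_card)
qed

lemma is_path_suffix: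
  assumes "is_path A W (ys @ w # zs) u v" and "set (w # zs) \<subseteq> W'"
  shows "is_path A W' (w # zs) w v"
proof -
  let ?p = "ys @ w # zs"
  have arcs: "\<forall>i < length ?p - 1. (?p ! i, ?p ! Suc i) \<in> A" and "last ?p = v"
    using assms(1) unfolding is_path_def by auto
  have "((w # zs) ! i, (w # zs) ! Suc i) \<in> A" if "i < length (w # zs) - 1" for i
  proof -
    have "length ys + i < length ?p - 1" using that by simp
    then have "(?p ! (length ys + i), ?p ! Suc (length ys + i)) \<in> A"
      using arcs by blast
    moreover have "?p ! (length ys + i) = (w # zs) ! i"
      by (simp add: nth_append)
    moreover have "?p ! Suc (length ys + i) = (w # zs) ! Suc i"
      by (metis add_Suc_right nth_append_length_plus)
    ultimately show ?thesis by simp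
  qed
  with \<open>last ?p = v\<close> assms(2) show ?thesis
    unfolding is_path_def by auto
qed

lemma is_path_last_exit:
  assumes "is_path A W p u v" and "\<not> set p \<subseteq> U"
  obtains w where "w \<in> set p" "w \<notin> U" "reachable_in A (U \<union> {w}) w v"
proof -
  obtain ys w zs where p: "p = ys @ w # zs" "w \<notin> U" "\<forall>z\<in>set zs. z \<in> U"
    using split_list_last_prop[of p "\<lambda>z. z \<notin> U"] assms(2) by blast
  have "is_path A (U \<union> {w}) (w # zs) w v"
    using is_path_suffix[of A W ys w zs u v] assms(1) p by auto
  with p show ?thesis
    using that unfolding reachable_in_def by auto
qed

lemma lp_dst_feasible_path_cover_weight:
  assumes "lp_dst_feasible V A r K x f" "finite V" "t \<in> K" "Y \<subseteq> V"
    and "\<And>P. P \<in> simple_paths V A r t \<Longrightarrow> \<exists>w\<in>Y. w \<in> set P"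
  shows "1 \<le> sum x Y"
proof -
  let ?Ps = "simple_paths V A r t"
  have sum_one: "(\<Sum>P\<in>?Ps. f t P) = 1"
    and capacity: "\<And>w. w \<in> V \<Longrightarrow> (\<Sum>P\<in>{P \<in> ?Ps. w \<in> set P}. f t P) \<le> x w"
    and nonneg: "\<And>P. P \<in> ?Ps \<Longrightarrow> 0 \<le> f t P"
    using assms(1,3) unfolding lp_dst_feasible_def by auto
  have finY: "finite Y" using assms(2,4) finite_subset by blast
  have "1 \<le> (\<Sum>w\<in>Y. \<Sum>P\<in>{P \<in> ?Ps. w \<in> set P}. f t P)"
    using sum_le_sum_over_cover[of ?Ps Y "f t" "\<lambda>P w. w \<in> set P"]
      finite_simple_paths[OF assms(2)] finY nonneg assms(5) sum_one by auto
  also have "\<dots> \<le> sum x Y"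
    using capacity assms(4) by (intro sum_mono) auto
  finally show ?thesis .
qed

theorem claim1:
  fixes V :: "'a set" and A :: "('a \<times> 'a) set" and c x :: "'a \<Rightarrow> real"
    and r :: 'a and K :: "'a set" and f :: "'a \<Rightarrow> 'a list \<Rightarrow> real"
  assumes "dst_instance V A c r K"
    and "lp_dst_feasible V A r K x f"
  defines "n \<equiv> card V"
  defines "S \<equiv> {v \<in> V. x v > 0}"
  defines "U \<equiv> {v \<in> V. x v \<ge> 1 / sqrt (real n)}"
  defines "U' \<equiv> S - U"
  defines "EXt \<equiv> {t \<in> K. \<not> reachable_in A U r t}"
  shows "\<forall>t \<in> EXt. real (card {w \<in> U'. reachable_in A (U \<union> {w}) w t}) \<ge> sqrt (real n)"
proof
  fix t assume "t \<in> EXt"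
  then have t: "t \<in> K" "\<not> reachable_in A U r t" unfolding EXt_def by auto
  have finV: "finite V" and "r \<in> V" using assms(1) unfolding dst_instance_def by auto
  have x_nonneg: "\<And>v. v \<in> V \<Longrightarrow> 0 \<le> x v"
    using assms(2) unfolding lp_dst_feasible_def by auto
  define X where "X = {w \<in> U'. reachable_in A (U \<union> {w}) w t}"
  define Y where "Y = {w \<in> V - U. reachable_in A (U \<union> {w}) w t}"
  have "\<exists>w\<in>Y. w \<in> set P" if "P \<in> simple_paths V A r t" for P
  proof -
    have P: "is_path A V P r t" using that unfolding simple_paths_def by auto
    then have "\<not> set P \<subseteq> U"
      using t(2) unfolding reachable_in_def is_path_def by auto
    with P obtain w where "w \<in> set P" "w \<notin> U" "reachable_in A (U \<union> {w}) w t"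
      by (rule is_path_last_exit)
    with P show ?thesis unfolding Y_def is_path_def by auto
  qed
  then have "1 \<le> sum x Y"
    by (intro lp_dst_feasible_path_cover_weight[OF assms(2) finV t(1)]) (auto simp: Y_def)
  also have "sum x Y = sum x X"
    using finV x_nonneg
    by (intro sum.mono_neutral_right) (auto simp: X_def Y_def U'_def S_def less_le)
  also have "\<dots> \<le> real (card X) * (1 / sqrt (real n))"
    by (rule sum_bounded_above) (auto simp: X_def U'_def U_def S_def)
  finally have "1 \<le> real (card X) / sqrt (real n)" by simp
  moreover have "0 < sqrt (real n)"
    using finV \<open>r \<in> V\<close> unfolding n_def by (auto simp: card_gt_0_iff)
  ultimately show "sqrt (real n) \<le> real (card {w \<in> U'. reachable_in A (U \<union> {w}) w t})"
    by (simp add: X_def field_simps)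
qed

end
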